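(* Let $G$ be an infinite finitely generated group and let $p\in\mathbb{N}$, $p\ge 2$. Then $HX_0(G,\mathbb{Z}_p)=0$. Equivalently: for every function $c\colon G\to\mathbb{Z}_p$ there exist $R>0$ and a $1$-chain $\psi=\sum_{x,y\in G}\psi_{[x,y]}[x,y]$ with coefficients $\psi_{[x,y]}\in\mathbb{Z}_p$ and $\psi_{[x,y]}=0$ whenever $d(x,y)\ge R$, such that $\partial\psi=c$.
   Context: Fix a finite symmetric generating set $S$ of $G$ and let $d$ be the word metric on $G$ with respect to $S$ (equivalently the path metric of the Cayley graph $\Gamma_G$). For an abelian group $A$, let $CX_0(G,A)$ be the group of all functions $G\to A$ (formal sums $\sum_{x\in G}c_x x$, possibly infinite), and let $CX_1(G,A)$ be the group of formal (possibly infinite) $1$-chains $c=\sum_{x,y\in G}c_{[x,y]}[x,y]$ with $c_{[x,y]}\in A$ such that for each $c$ there is $R>0$ with $c_{[x,y]}=0$ whenever $d(x,y)\ge R$. The differential $\partial\colon CX_1(G,A)\to CX_0(G,A)$ is the $A$-linear extension of $\partial[x,y]=y-x$ (well defined since, by the bounded-range condition and local finiteness, each vertex receives finitely many contributions). The $0$-th coarse (locally finite) homology is $HX_0(G,A)=CX_0(G,A)/\operatorname{Im}\partial$. Here $\mathbb{Z}_p$ is the cyclic group of order $p$. *)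

theory Defs
  imports "HOL-Algebra.Algebra" "HOL-Number_Theory.Cong"
begin

definition word_prod :: "('a, 'b) monoid_scheme \<Rightarrow> 'a list \<Rightarrow> 'a" where
  "word_prod G ws = foldr (\<lambda>s g. s \<otimes>\<^bsub>G\<^esub> g) ws \<one>\<^bsub>G\<^esub>"

definition word_length :: "('a, 'b) monoid_scheme \<Rightarrow> 'a set \<Rightarrow> 'a \<Rightarrow> nat" where
  "word_length G S g = (LEAST n. \<exists>ws. length ws = n \<and> set ws \<subseteq> S \<and> word_prod G ws = g)"

definition word_dist :: "('a, 'b) monoid_scheme \<Rightarrow> 'a set \<Rightarrow> 'a \<Rightarrow> 'a \<Rightarrow> nat" where
  "word_dist G S x y = word_length G S (inv\<^bsub>G\<^esub> x \<otimes>\<^bsub>G\<^esub> y)"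

text \<open>Boundary of a 1-chain psi of range < R: (d psi)(v) = sum_x psi[x,v] - sum_y psi[v,y],
  where only pairs at distance < R contribute (all others have coefficient 0).\<close>
definition chain_boundary ::
  "('a, 'b) monoid_scheme \<Rightarrow> 'a set \<Rightarrow> nat \<Rightarrow> ('a \<Rightarrow> 'a \<Rightarrow> int) \<Rightarrow> 'a \<Rightarrow> int" where
  "chain_boundary G S R psi v =
     (\<Sum>x\<in>{x\<in>carrier G. word_dist G S x v < R}. psi x v)
   - (\<Sum>y\<in>{y\<in>carrier G. word_dist G S v y < R}. psi v y)"

end

theory Submission
  imports Defs
begin

(* The statement holds already with integer coefficients and range R = 2, so the reduction
   mod p plays no role.  The argument works for any connected, locally finite, infinite graph
   with path metric d and base point r0:
   - a vertex is "escaping" if it lies on geodesics from r0 to points arbitrarily far away;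
     r0 is escaping, escaping vertices have an escaping neighbour one level further out
     (a Koenig-type argument using finite balls), and every other vertex has a neighbour
     one level closer to r0.  This defines a flow v |-> flow v along edges;
   - a height function increases strictly along the flow, so the flow has no cycles, and
     every vertex has only finitely many flow ancestors;
   - for a 0-chain c, put w x = (sum of c over the ancestors of x) and let psi carry the
     coefficient -w x on the edge [x, flow x]; then the boundary of psi is c. *)

locale acyclic_flow =
  fixes V :: "'a set" and f :: "'a \<Rightarrow> 'a"
  assumes flow_closed: "v \<in> V \<Longrightarrow> f v \<in> V"
    and no_cycle: "v \<in> V \<Longrightarrow> (f ^^ k) v = v \<Longrightarrow> k = 0"
    and finite_ancestors: "a \<in> V \<Longrightarrow> finite {v \<in> V. \<exists>k. (f ^^ k) v = a}"
begin

definition ancestors :: "'a \<Rightarrow> 'a set" where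
  "ancestors a = {v \<in> V. \<exists>k. (f ^^ k) v = a}"

definition preimage :: "'a \<Rightarrow> 'a set" where
  "preimage u = {x \<in> V. f x = u}"

lemma preimage_subset_ancestors: "preimage u \<subseteq> ancestors u"
  unfolding preimage_def ancestors_def by (auto intro: exI[of _ 1])

lemma finite_preimage: "u \<in> V \<Longrightarrow> finite (preimage u)"
  using finite_ancestors preimage_subset_ancestors finite_subset unfolding ancestors_def by blast

lemma ancestors_rec:
  assumes "u \<in> V" shows "ancestors u = insert u (\<Union>x\<in>preimage u. ancestors x)"
proof (intro equalityI subsetI)
  fix v assume "v \<in> ancestors u"
  then obtain k where v: "v \<in> V" "(f ^^ k) v = u" unfolding ancestors_def by auto
  show "v \<in> insert u (\<Union>x\<in>preimage u. ancestors x)"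
  proof (cases k)
    case (Suc j)
    have "(f ^^ j) v \<in> V" using v(1) by (induction j) (auto simp: flow_closed)
    then have "(f ^^ j) v \<in> preimage u" using v Suc unfolding preimage_def by auto
    moreover have "v \<in> ancestors ((f ^^ j) v)" using v unfolding ancestors_def by auto
    ultimately show ?thesis by blast
  qed (use v in auto)
next
  fix v assume "v \<in> insert u (\<Union>x\<in>preimage u. ancestors x)"
  then consider "v = u" | x k where "v \<in> V" "(f ^^ k) v = x" "f x = u"
    unfolding ancestors_def preimage_def by auto
  then show "v \<in> ancestors u"
  proof cases
    case 1 then show ?thesis using assms unfolding ancestors_def by (auto intro: exI[of _ 0])
  next
    case 2 then show ?thesis unfolding ancestors_def by (auto intro!: exI[of _ "Suc k"])
  qed
qed

lemma self_notin_ancestors_preimage: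
  assumes "u \<in> V" "x \<in> preimage u" shows "u \<notin> ancestors x"
proof
  assume "u \<in> ancestors x"
  then obtain k where "(f ^^ k) u = x" unfolding ancestors_def by auto
  then have "(f ^^ Suc k) u = u" using assms(2) unfolding preimage_def by auto
  then show False using no_cycle[OF assms(1)] by blast
qed

text \<open>Distinct preimages of u have disjoint ancestor sets, since the flow is a function
  and has no cycles.\<close>
lemma ancestors_disjoint:
  assumes "u \<in> V" "x \<in> preimage u" "y \<in> preimage u" "x \<noteq> y"
  shows "ancestors x \<inter> ancestors y = {}"
proof -
  have no_path: "(f ^^ m) x' \<noteq> y'" if xy: "x' \<in> preimage u" "y' \<in> preimage u" "x' \<noteq> y'" for m x' y'
  proof
    assume path: "(f ^^ m) x' = y'"
    then obtain m' where m': "m = Suc m'" using xy(3) by (cases m) auto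
    have "f x' = u" "f y' = u" using xy(1,2) unfolding preimage_def by auto
    then have "(f ^^ Suc m') u = f ((f ^^ m') (f x'))" by simp
    also have "\<dots> = f y'" using path m' by (simp add: funpow_swap1)
    also have "\<dots> = u" by fact
    finally show False using no_cycle[OF assms(1)] by blast
  qed
  show ?thesis
  proof (rule ccontr)
    assume "\<not> ?thesis"
    then obtain v k j where v: "(f ^^ k) v = x" "(f ^^ j) v = y" unfolding ancestors_def by auto
    have "(f ^^ (j - k)) x = y" if "k \<le> j" using v that by (metis funpow_add le_add_diff_inverse2 o_apply)
    moreover have "(f ^^ (k - j)) y = x" if "j \<le> k" using v that by (metis funpow_add le_add_diff_inverse2 o_apply)
    ultimately show False using no_path assms(2-4) by (metis nat_le_linear)
  qed
qed

lemma ancestor_sum_rec: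
  assumes "u \<in> V"
  shows "sum c (ancestors u) = c u + (\<Sum>x\<in>preimage u. sum c (ancestors x))"
proof -
  have fins: "\<forall>x\<in>preimage u. finite (ancestors x)"
    using finite_ancestors unfolding preimage_def ancestors_def by auto
  have "sum c (ancestors u) = c u + sum c (\<Union>x\<in>preimage u. ancestors x)"
    unfolding ancestors_rec[OF assms]
    by (rule sum.insert) (use fins finite_preimage[OF assms] self_notin_ancestors_preimage[OF assms] in auto)
  also have "sum c (\<Union>x\<in>preimage u. ancestors x) = (\<Sum>x\<in>preimage u. sum c (ancestors x))"
    by (rule sum.UNION_disjoint) (use fins finite_preimage[OF assms] ancestors_disjoint[OF assms] in auto)
  finally show ?thesis .
qed

end

text \<open>The path metric of a connected, locally finite, infinite graph on V, with base point r0: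
  d_step says that every geodesic can be started by an edge (a pair at distance 1).\<close>
locale geodesic_graph =
  fixes V :: "'a set" and d :: "'a \<Rightarrow> 'a \<Rightarrow> nat" and r0 :: 'a
  assumes d_refl: "x \<in> V \<Longrightarrow> d x x = 0"
    and d_sym: "x \<in> V \<Longrightarrow> y \<in> V \<Longrightarrow> d x y = d y x"
    and d_triangle: "x \<in> V \<Longrightarrow> y \<in> V \<Longrightarrow> z \<in> V \<Longrightarrow> d x z \<le> d x y + d y z"
    and d_step: "x \<in> V \<Longrightarrow> y \<in> V \<Longrightarrow> d x y = Suc n \<Longrightarrow> \<exists>z\<in>V. d x z = 1 \<and> d z y = n"
    and finite_balls: "x \<in> V \<Longrightarrow> finite {y \<in> V. d x y \<le> n}"
    and infinite_V: "infinite V"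
    and base_in_V: "r0 \<in> V"
begin

abbreviation level :: "'a \<Rightarrow> nat" where "level v \<equiv> d r0 v"

abbreviation on_geodesic :: "'a \<Rightarrow> 'a \<Rightarrow> bool" where
  "on_geodesic v u \<equiv> level v + d v u = level u"

definition escaping :: "'a set" where
  "escaping = {v \<in> V. \<forall>n. \<exists>u\<in>V. n \<le> level u \<and> on_geodesic v u}"

lemma escaping_subset: "escaping \<subseteq> V"
  unfolding escaping_def by auto

lemma unbounded_level: "\<exists>u\<in>V. n \<le> level u"
proof (rule ccontr)
  assume "\<not> ?thesis"
  then have "V \<subseteq> {y \<in> V. level y \<le> n}" by force
  then show False using finite_balls[OF base_in_V, of n] infinite_V finite_subset by blast
qed

lemma base_escaping: "r0 \<in> escaping"
  unfolding escaping_def using unbounded_level base_in_V d_refl by auto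

lemma escaping_down:
  assumes "w \<in> escaping" "u \<in> V" "on_geodesic u w" shows "u \<in> escaping"
  unfolding escaping_def
proof (intro CollectI conjI allI)
  fix n
  have wV: "w \<in> V" using assms(1) escaping_subset by auto
  obtain x where x: "x \<in> V" "n \<le> level x" "on_geodesic w x"
    using assms(1) unfolding escaping_def by blast
  have "d u x \<le> d u w + d w x" using d_triangle[OF assms(2) wV x(1)] .
  moreover have "level x \<le> level u + d u x" using d_triangle[OF base_in_V assms(2) x(1)] .
  ultimately show "\<exists>x\<in>V. n \<le> level x \<and> on_geodesic u x" using x assms by (intro bexI[of _ x]) auto
qed (use assms in auto)

lemma non_escaping_uniform:
  assumes "finite U" "U \<subseteq> V - escaping"
  shows "\<exists>N. \<forall>u\<in>U. \<forall>x\<in>V. N \<le> level x \<longrightarrow> \<not> on_geodesic u x"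
proof -
  have "\<forall>u\<in>U. eventually (\<lambda>N. \<forall>x\<in>V. N \<le> level x \<longrightarrow> \<not> on_geodesic u x) sequentially"
  proof
    fix u assume "u \<in> U"
    then have "u \<in> V" "u \<notin> escaping" using assms(2) by auto
    then obtain N where "\<forall>x\<in>V. \<not> (N \<le> level x \<and> on_geodesic u x)"
      unfolding escaping_def by blast
    then show "eventually (\<lambda>N. \<forall>x\<in>V. N \<le> level x \<longrightarrow> \<not> on_geodesic u x) sequentially"
      unfolding eventually_sequentially by (intro exI[of _ N]) auto
  qed
  from eventually_ball_finite[OF assms(1) this] show ?thesis
    unfolding eventually_sequentially by blast
qed

text \<open>Koenig's lemma in disguise: an escaping vertex has an escaping neighbour one level higher.\<close>
lemma escaping_up:
  assumes "v \<in> escaping" shows "\<exists>w\<in>V. d v w = 1 \<and> level w = Suc (level v) \<and> w \<in> escaping"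
proof (rule ccontr)
  assume none: "\<not> ?thesis"
  have vV: "v \<in> V" using assms escaping_subset by auto
  let ?U = "{w \<in> V. d v w \<le> 1 \<and> level w = Suc (level v)}"
  have "?U \<subseteq> V - escaping"
  proof
    fix w assume w: "w \<in> ?U"
    then have "w \<in> V" "d v w \<le> 1" "level w = Suc (level v)" by auto
    moreover from this have "d v w = 1" using d_triangle[OF base_in_V vV \<open>w \<in> V\<close>] by linarith
    ultimately show "w \<in> V - escaping" using none by auto
  qed
  moreover have "finite ?U" using finite_balls[OF vV, of 1] by (rule finite_subset[rotated]) auto
  ultimately obtain N where N: "\<forall>w\<in>?U. \<forall>x\<in>V. N \<le> level x \<longrightarrow> \<not> on_geodesic w x"
    using non_escaping_uniform by blast
  obtain u where u: "u \<in> V" "N + Suc (level v) \<le> level u" "on_geodesic v u"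
    using assms unfolding escaping_def by blast
  then obtain k where k: "d v u = Suc k" by (cases "d v u") auto
  then obtain w where w: "w \<in> V" "d v w = 1" "d w u = k" using d_step[OF vV u(1)] by blast
  have "level w \<le> level v + 1" using d_triangle[OF base_in_V vV w(1)] w by simp
  moreover have "level u \<le> level w + k" using d_triangle[OF base_in_V w(1) u(1)] w by simp
  ultimately have "w \<in> ?U" "on_geodesic w u" using u k w by auto
  then show False using N u by auto
qed

text \<open>A non-escaping vertex is not r0, so it has a neighbour one level lower.\<close>
lemma non_escaping_down:
  assumes "v \<in> V" "v \<notin> escaping" shows "\<exists>w\<in>V. d v w = 1 \<and> Suc (level w) = level v"
proof -
  have "level v \<noteq> 0"
  proof
    assume "level v = 0"
    then have "on_geodesic v r0" using d_sym[OF assms(1) base_in_V] d_refl[OF base_in_V] by simp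
    then show False using escaping_down[OF base_escaping assms(1)] assms(2) by blast
  qed
  then obtain k where k: "d v r0 = Suc k"
    using d_sym[OF assms(1) base_in_V] by (cases "level v") auto
  then obtain w where w: "w \<in> V" "d v w = 1" "d w r0 = k" using d_step[OF assms(1) base_in_V] by blast
  then show ?thesis using k d_sym[OF assms(1) base_in_V] d_sym[OF w(1) base_in_V] by auto
qed

definition flow :: "'a \<Rightarrow> 'a" where
  "flow v = (if v \<in> escaping
     then SOME w. w \<in> V \<and> d v w = 1 \<and> level w = Suc (level v) \<and> w \<in> escaping
     else SOME w. w \<in> V \<and> d v w = 1 \<and> Suc (level w) = level v)"

lemma flow_escaping:
  assumes "v \<in> escaping"
  shows "flow v \<in> V" "d v (flow v) = 1" "level (flow v) = Suc (level v)" "flow v \<in> escaping"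
proof -
  have "\<exists>w. w \<in> V \<and> d v w = 1 \<and> level w = Suc (level v) \<and> w \<in> escaping"
    using escaping_up[OF assms] by blast
  from someI_ex[OF this] show "flow v \<in> V" "d v (flow v) = 1" "level (flow v) = Suc (level v)"
    "flow v \<in> escaping" using assms unfolding flow_def by auto
qed

lemma flow_non_escaping:
  assumes "v \<in> V" "v \<notin> escaping"
  shows "flow v \<in> V" "d v (flow v) = 1" "Suc (level (flow v)) = level v"
proof -
  have "\<exists>w. w \<in> V \<and> d v w = 1 \<and> Suc (level w) = level v"
    using non_escaping_down[OF assms] by blast
  from someI_ex[OF this] show "flow v \<in> V" "d v (flow v) = 1" "Suc (level (flow v)) = level v"
    using assms unfolding flow_def by auto
qed

lemma flow_in_V: "v \<in> V \<Longrightarrow> flow v \<in> V"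
  by (cases "v \<in> escaping") (simp_all add: flow_escaping flow_non_escaping)

lemma flow_dist: "v \<in> V \<Longrightarrow> d v (flow v) = 1"
  by (cases "v \<in> escaping") (simp_all add: flow_escaping flow_non_escaping)

lemma flow_iter_in_V: "v \<in> V \<Longrightarrow> (flow ^^ k) v \<in> V"
  by (induction k) (auto simp: flow_in_V)

text \<open>A height function strictly increasing along the flow: escaping vertices sit above
  all others, ordered by level; the others are ordered by decreasing level.\<close>
definition height :: "'a \<Rightarrow> int" where
  "height v = (if v \<in> escaping then int (level v) else - int (level v) - 1)"

lemma height_flow: "v \<in> V \<Longrightarrow> height v < height (flow v)"
proof (cases "v \<in> escaping")
  case True then show ?thesis using flow_escaping[OF True] unfolding height_def by auto
next
  case False
  moreover assume "v \<in> V"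
  ultimately show ?thesis using flow_non_escaping unfolding height_def by force
qed

lemma height_flow_iter: "v \<in> V \<Longrightarrow> height v + int k \<le> height ((flow ^^ k) v)"
proof (induction k)
  case (Suc k)
  then show ?case using height_flow[OF flow_iter_in_V[OF Suc.prems, of k]] by auto
qed simp

lemma flow_no_cycle: "v \<in> V \<Longrightarrow> (flow ^^ k) v = v \<Longrightarrow> k = 0"
  using height_flow_iter[of v k] by auto

lemma flow_source:
  assumes "v \<in> V" "(flow ^^ k) v = a"
  shows "(v \<in> escaping \<and> level v \<le> level a) \<or>
         (\<exists>u\<in>V - escaping. level u \<le> Suc (level a) \<and> on_geodesic u v)"
  using assms
proof (induction k arbitrary: v)
  case 0
  then show ?case using d_refl by (cases "v \<in> escaping") (auto intro!: bexI[of _ v])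
next
  case (Suc k)
  have fv: "flow v \<in> V" using flow_in_V Suc.prems by auto
  have "(flow ^^ k) (flow v) = a" using Suc.prems by (simp add: funpow_swap1)
  from Suc.IH[OF fv this] show ?case
  proof
    assume A: "flow v \<in> escaping \<and> level (flow v) \<le> level a"
    show ?thesis
    proof (cases "v \<in> escaping")
      case True then show ?thesis using flow_escaping[OF True] A by auto
    next
      case False then show ?thesis using flow_non_escaping[OF Suc.prems(1) False] A Suc.prems d_refl
        by (intro disjI2 bexI[of _ v]) auto
    qed
  next
    assume "\<exists>u\<in>V - escaping. level u \<le> Suc (level a) \<and> on_geodesic u (flow v)"
    then obtain u where u: "u \<in> V" "u \<notin> escaping" "level u \<le> Suc (level a)" "on_geodesic u (flow v)"
      by blast
    have v: "v \<notin> escaping" using u escaping_down flow_escaping(4) by blast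
    have "d u v \<le> d u (flow v) + d (flow v) v" using d_triangle[OF u(1) fv Suc.prems(1)] .
    moreover have "level v \<le> level u + d u v" using d_triangle[OF base_in_V u(1) Suc.prems(1)] .
    moreover have "d (flow v) v = 1" using flow_dist[OF Suc.prems(1)] d_sym[OF Suc.prems(1) fv] by simp
    ultimately show ?thesis using u flow_non_escaping[OF Suc.prems(1) v]
      by (intro disjI2 bexI[of _ u]) auto
  qed
qed

text \<open>Each vertex has only finitely many flow ancestors: they all lie in a bounded ball.\<close>
lemma finite_flow_ancestors:
  assumes "a \<in> V" shows "finite {v \<in> V. \<exists>k. (flow ^^ k) v = a}"
proof -
  let ?U = "{u \<in> V - escaping. level u \<le> Suc (level a)}"
  have "finite ?U" using finite_balls[OF base_in_V, of "Suc (level a)"]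
    by (rule finite_subset[rotated]) auto
  then obtain N where N: "\<forall>u\<in>?U. \<forall>x\<in>V. N \<le> level x \<longrightarrow> \<not> on_geodesic u x"
    using non_escaping_uniform by blast
  have "{v \<in> V. \<exists>k. (flow ^^ k) v = a} \<subseteq> {y \<in> V. level y \<le> max (level a) N}"
  proof
    fix v assume "v \<in> {v \<in> V. \<exists>k. (flow ^^ k) v = a}"
    then obtain k where v: "v \<in> V" "(flow ^^ k) v = a" by blast
    from flow_source[OF v] have "level v \<le> level a \<or> \<not> N \<le> level v"
      using N v(1) by blast
    then show "v \<in> {y \<in> V. level y \<le> max (level a) N}" using v(1) by auto
  qed
  then show ?thesis using finite_balls[OF base_in_V] finite_subset by blast
qed

sublocale acyclic_flow V flow
  by unfold_locales (auto simp: flow_in_V flow_no_cycle finite_flow_ancestors)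

lemma flow_chain_boundary:
  fixes w :: "'a \<Rightarrow> int"
  defines "psi x y \<equiv> if x \<in> V \<and> y = flow x then - w x else 0"
  assumes vV: "v \<in> V"
  shows "(\<Sum>x\<in>{x \<in> V. d x v < 2}. psi x v) - (\<Sum>y\<in>{y \<in> V. d v y < 2}. psi v y)
           = w v - (\<Sum>x\<in>preimage v. w x)"
proof -
  have finite_in: "finite {x \<in> V. d x v < 2}" using finite_balls[OF vV, of 1]
    by (rule finite_subset[rotated]) (use d_sym vV in fastforce)
  have finite_out: "finite {y \<in> V. d v y < 2}" using finite_balls[OF vV, of 1]
    by (rule finite_subset[rotated]) auto
  have preimage_near: "{x \<in> V. d x v < 2 \<and> flow x = v} = preimage v"
    unfolding preimage_def using flow_dist by auto
  have "(\<Sum>x\<in>{x \<in> V. d x v < 2}. psi x v) = (\<Sum>x\<in>{x \<in> V. d x v < 2}. if flow x = v then - w x else 0)"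
    unfolding psi_def by (rule sum.cong) auto
  also have "\<dots> = - (\<Sum>x\<in>preimage v. w x)"
    by (simp add: sum.inter_filter[symmetric, OF finite_in] preimage_near sum_negf)
  finally have inflow: "(\<Sum>x\<in>{x \<in> V. d x v < 2}. psi x v) = - (\<Sum>x\<in>preimage v. w x)" .
  have "(\<Sum>y\<in>{y \<in> V. d v y < 2}. psi v y) = (\<Sum>y\<in>{y \<in> V. d v y < 2}. if y = flow v then - w v else 0)"
    unfolding psi_def using vV by (intro sum.cong) auto
  also have "\<dots> = - w v" using finite_out flow_in_V[OF vV] flow_dist[OF vV] by (simp add: sum.delta')
  finally show ?thesis using inflow by simp
qed

theorem every_0_chain_is_boundary:
  fixes c :: "'a \<Rightarrow> int"
  shows "\<exists>psi. (\<forall>x\<in>V. \<forall>y\<in>V. 2 \<le> d x y \<longrightarrow> psi x y = 0) \<and>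
     (\<forall>v\<in>V. (\<Sum>x\<in>{x \<in> V. d x v < 2}. psi x v) - (\<Sum>y\<in>{y \<in> V. d v y < 2}. psi v y) = c v)"
proof -
  define w where "w x = sum c (ancestors x)" for x
  define psi where "psi x y = (if x \<in> V \<and> y = flow x then - w x else 0)" for x y
  have "\<forall>x\<in>V. \<forall>y\<in>V. 2 \<le> d x y \<longrightarrow> psi x y = 0"
    unfolding psi_def using flow_dist by auto
  moreover have "(\<Sum>x\<in>{x \<in> V. d x v < 2}. psi x v) - (\<Sum>y\<in>{y \<in> V. d v y < 2}. psi v y) = c v"
    if "v \<in> V" for v
    using flow_chain_boundary[OF that, of w] ancestor_sum_rec[OF that, of c]
    unfolding psi_def w_def by simp
  ultimately show ?thesis by blast
qed

end

context
  fixes G :: "('a, 'b) monoid_scheme" (structure) and S :: "'a set"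
  assumes group_G: "group G" and S_carrier: "S \<subseteq> carrier G"
    and S_symmetric: "\<forall>s\<in>S. inv s \<in> S" and S_generates: "generate G S = carrier G"
    and finite_S: "finite S"
begin

interpretation group G by (rule group_G)

lemma word_prod_carrier: "set ws \<subseteq> S \<Longrightarrow> word_prod G ws \<in> carrier G"
  by (induction ws) (use S_carrier in \<open>auto simp: word_prod_def\<close>)

lemma word_prod_append:
  "set xs \<subseteq> S \<Longrightarrow> set ys \<subseteq> S \<Longrightarrow> word_prod G (xs @ ys) = word_prod G xs \<otimes> word_prod G ys"
proof (induction xs)
  case Nil then show ?case using word_prod_carrier by (simp add: word_prod_def)
next
  case (Cons x xs)
  then have "x \<in> carrier G" using S_carrier by auto
  then show ?case using Cons word_prod_carrier[of xs] word_prod_carrier[of ys]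
    by (simp add: word_prod_def m_assoc)
qed

lemma word_prod_inverse:
  "set ws \<subseteq> S \<Longrightarrow> word_prod G (rev (map (m_inv G) ws)) = inv (word_prod G ws)"
proof (induction ws)
  case Nil then show ?case by (simp add: word_prod_def)
next
  case (Cons s ws)
  have s: "s \<in> carrier G" "inv s \<in> S" using Cons S_carrier S_symmetric by auto
  have ws: "set (rev (map (m_inv G) ws)) \<subseteq> S" using Cons.prems S_symmetric by auto
  have "word_prod G (rev (map (m_inv G) (s # ws))) = word_prod G (rev (map (m_inv G) ws)) \<otimes> word_prod G [inv s]"
    using word_prod_append[OF ws, of "[inv s]"] s by simp
  also have "\<dots> = inv (word_prod G ws) \<otimes> inv s" using Cons s by (simp add: word_prod_def)
  also have "\<dots> = inv (s \<otimes> word_prod G ws)" using s Cons word_prod_carrier by (simp add: inv_mult_group)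
  finally show ?case by (simp add: word_prod_def)
qed

text \<open>Since S is symmetric, every element of the generated subgroup is a product of a word in S.\<close>
lemma generate_word: "g \<in> generate G S \<Longrightarrow> \<exists>ws. set ws \<subseteq> S \<and> word_prod G ws = g"
proof (induction rule: generate.induct)
  case one then show ?case by (intro exI[of _ "[]"]) (simp add: word_prod_def)
next
  case (incl h) then show ?case using S_carrier by (intro exI[of _ "[h]"]) (auto simp: word_prod_def)
next
  case (inv h) then show ?case using S_carrier S_symmetric
    by (intro exI[of _ "[inv h]"]) (auto simp: word_prod_def)
next
  case (eng h1 h2)
  then obtain xs ys where "set xs \<subseteq> S" "word_prod G xs = h1" "set ys \<subseteq> S" "word_prod G ys = h2"
    by blast
  then show ?case using word_prod_append by (intro exI[of _ "xs @ ys"]) auto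
qed

lemma shortest_word:
  assumes "g \<in> carrier G"
  shows "\<exists>ws. length ws = word_length G S g \<and> set ws \<subseteq> S \<and> word_prod G ws = g"
proof -
  obtain ws where "set ws \<subseteq> S \<and> word_prod G ws = g"
    using generate_word S_generates assms by blast
  then have "\<exists>n ws. length ws = n \<and> set ws \<subseteq> S \<and> word_prod G ws = g" by blast
  from LeastI_ex[OF this] show ?thesis unfolding word_length_def .
qed

lemma word_length_le: "set ws \<subseteq> S \<Longrightarrow> word_length G S (word_prod G ws) \<le> length ws"
  unfolding word_length_def by (rule Least_le) blast

lemma word_length_mult:
  assumes "g \<in> carrier G" "h \<in> carrier G"
  shows "word_length G S (g \<otimes> h) \<le> word_length G S g + word_length G S h"
proof -
  obtain xs where xs: "length xs = word_length G S g" "set xs \<subseteq> S" "word_prod G xs = g"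
    using shortest_word[OF assms(1)] by blast
  obtain ys where ys: "length ys = word_length G S h" "set ys \<subseteq> S" "word_prod G ys = h"
    using shortest_word[OF assms(2)] by blast
  show ?thesis using word_length_le[of "xs @ ys"] xs ys word_prod_append by auto
qed

lemma word_length_inv: "g \<in> carrier G \<Longrightarrow> word_length G S (inv g) \<le> word_length G S g"
proof -
  assume "g \<in> carrier G"
  then obtain xs where xs: "length xs = word_length G S g" "set xs \<subseteq> S" "word_prod G xs = g"
    using shortest_word by blast
  have "set (rev (map (m_inv G) xs)) \<subseteq> S" using xs(2) S_symmetric by auto
  from word_length_le[OF this] show ?thesis using xs word_prod_inverse by auto
qed

lemma word_dist_sym:
  assumes "x \<in> carrier G" "y \<in> carrier G" shows "word_dist G S x y = word_dist G S y x"
proof -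
  have "inv y \<otimes> x = inv (inv x \<otimes> y)" "inv x \<otimes> y = inv (inv y \<otimes> x)"
    using assms by (simp_all add: inv_mult_group)
  then show ?thesis unfolding word_dist_def
    using word_length_inv[of "inv x \<otimes> y"] word_length_inv[of "inv y \<otimes> x"] assms by fastforce
qed

lemma word_dist_triangle:
  assumes "x \<in> carrier G" "y \<in> carrier G" "z \<in> carrier G"
  shows "word_dist G S x z \<le> word_dist G S x y + word_dist G S y z"
proof -
  have "inv x \<otimes> z = (inv x \<otimes> y) \<otimes> (inv y \<otimes> z)" using assms
    by (simp add: m_assoc[symmetric]) (simp add: m_assoc r_inv)
  then show ?thesis unfolding word_dist_def using word_length_mult assms by simp
qed

text \<open>Geodesics in the Cayley graph: the first letter of a shortest word is a first step.\<close>
lemma word_dist_step: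
  assumes x: "x \<in> carrier G" and y: "y \<in> carrier G" and dist: "word_dist G S x y = Suc n"
  shows "\<exists>z\<in>carrier G. word_dist G S x z = 1 \<and> word_dist G S z y = n"
proof -
  obtain s ws where ws: "length (s # ws) = Suc n" "set (s # ws) \<subseteq> S" "word_prod G (s # ws) = inv x \<otimes> y"
    using shortest_word[of "inv x \<otimes> y"] x y dist unfolding word_dist_def
    by (metis length_Suc_conv inv_closed m_closed)
  have s: "s \<in> carrier G" "s \<in> S" using ws S_carrier by auto
  define z where "z = x \<otimes> s"
  have z: "z \<in> carrier G" using x s z_def by simp
  have "inv x \<otimes> z = word_prod G [s]" using x s unfolding z_def by (simp add: m_assoc[symmetric] word_prod_def)
  then have first: "word_dist G S x z \<le> 1" using word_length_le[of "[s]"] s unfolding word_dist_def by simp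
  have "inv z \<otimes> y = inv s \<otimes> (inv x \<otimes> y)" unfolding z_def using x y s by (simp add: inv_mult_group m_assoc)
  also have "\<dots> = word_prod G ws"
    using ws(3)[symmetric] ws(2) s word_prod_carrier[of ws] by (simp add: word_prod_def m_assoc[symmetric])
  finally have rest: "word_dist G S z y \<le> n" using word_length_le[of ws] ws unfolding word_dist_def by simp
  show ?thesis using word_dist_triangle[OF x z y] first rest dist z by (intro bexI[of _ z]) auto
qed

lemma word_balls_finite:
  assumes x: "x \<in> carrier G" shows "finite {y \<in> carrier G. word_dist G S x y \<le> n}"
proof -
  have "{y \<in> carrier G. word_dist G S x y \<le> n}
          \<subseteq> (\<lambda>ws. x \<otimes> word_prod G ws) ` {ws. set ws \<subseteq> S \<and> length ws \<le> n}"
  proof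
    fix y assume y: "y \<in> {y \<in> carrier G. word_dist G S x y \<le> n}"
    obtain ws where ws: "length ws = word_dist G S x y" "set ws \<subseteq> S" "word_prod G ws = inv x \<otimes> y"
      using shortest_word[of "inv x \<otimes> y"] x y unfolding word_dist_def by auto
    have "x \<otimes> word_prod G ws = y" using ws x y by (simp add: m_assoc[symmetric])
    then show "y \<in> (\<lambda>ws. x \<otimes> word_prod G ws) ` {ws. set ws \<subseteq> S \<and> length ws \<le> n}"
      using ws y by force
  qed
  then show ?thesis using finite_lists_length_le[OF finite_S, of n] finite_subset by blast
qed

lemma word_metric_geodesic_graph:
  assumes "infinite (carrier G)" shows "geodesic_graph (carrier G) (word_dist G S) \<one>"
proof
  show "word_dist G S x x = 0" if "x \<in> carrier G" for x
    using word_length_le[of "[]"] that by (simp add: word_dist_def word_prod_def)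
qed (use assms word_dist_sym word_dist_triangle word_dist_step word_balls_finite in auto)

end

theorem lemma1:
  fixes G :: "('a, 'b) monoid_scheme" and S :: "'a set" and p :: nat
  assumes "group G"
    and "finite S" and "S \<subseteq> carrier G"
    and "\<forall>s\<in>S. inv\<^bsub>G\<^esub> s \<in> S"
    and "generate G S = carrier G"
    and "infinite (carrier G)"
    and "p \<ge> 2"
  shows "\<forall>c :: 'a \<Rightarrow> int. \<exists>(R::nat) (psi :: 'a \<Rightarrow> 'a \<Rightarrow> int). R > 0 \<and>
           (\<forall>x\<in>carrier G. \<forall>y\<in>carrier G. word_dist G S x y \<ge> R \<longrightarrow> [psi x y = 0] (mod int p)) \<and>
           (\<forall>v\<in>carrier G. [chain_boundary G S R psi v = c v] (mod int p))"
proof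
  fix c :: "'a \<Rightarrow> int"
  interpret geodesic_graph "carrier G" "word_dist G S" "\<one>\<^bsub>G\<^esub>"
    using word_metric_geodesic_graph assms(1-6) by blast
  obtain psi where "\<forall>x\<in>carrier G. \<forall>y\<in>carrier G. 2 \<le> word_dist G S x y \<longrightarrow> psi x y = 0"
    and "\<forall>v\<in>carrier G. chain_boundary G S 2 psi v = c v"
    using every_0_chain_is_boundary[of c] unfolding chain_boundary_def by blast
  then show "\<exists>R psi. R > 0 \<and>
           (\<forall>x\<in>carrier G. \<forall>y\<in>carrier G. word_dist G S x y \<ge> R \<longrightarrow> [psi x y = 0] (mod int p)) \<and>
           (\<forall>v\<in>carrier G. [chain_boundary G S R psi v = c v] (mod int p))"
    by (intro exI[of _ 2] exI[of _ psi]) auto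
qed

end
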